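(* Let $n$ and $s$ be integers with $\gcd(s,n)=1$ and let $\mathcal C$ be an $\mathbb F_{q^n}$-subspace of $\mathcal L_{n,q}$ of dimension $k>1$. If $\dim(\mathcal C\cap\mathcal C^{[s]})=k-1$ and $\mathcal C\cap U_1=\{0\}$, then there exists $p(x)\in\mathcal L_{n,q}$ such that \[\mathcal C=\langle p(x),p(x)^{[s]},\ldots,p(x)^{[s(k-1)]}\rangle_{\mathbb F_{q^n}}.\] If moreover $\mathcal C$ contains at least one invertible linearized polynomial, then $p(x)$ is invertible and $\mathcal C$ is equivalent to $\mathcal G_{k,s}$.
   Context: $q$ is a prime power, $[i]:=q^i$. $\mathcal L_{n,q}$ is the $\mathbb F_{q^n}$-vector space of linearized polynomials $f(x)=\sum_{i=0}^{n-1}a_ix^{[i]}$, $a_i\in\mathbb F_{q^n}$, identified with $\mathbb F_q$-linear maps of $\mathbb F_{q^n}$ (so rank, kernel and invertibility refer to these maps; $\circ$ is composition). For $f(x)=\sum_i a_ix^{[i]}$, $f(x)^{[j]}:=x^{[j]}\circ f(x)=\sum_i a_i^{[j]}x^{[(i+j)\bmod n]}$, and $\mathcal C^{[j]}=\{f^{[j]}\colon f\in\mathcal C\}$. $U_1=\{\alpha x+\alpha^{[1]}x^{[1]}+\cdots+\alpha^{[n-1]}x^{[n-1]}\colon\alpha\in\mathbb F_{q^n}\}$. $\mathcal G_{k,s}=\langle x,x^{[s]},\ldots,x^{[s(k-1)]}\rangle_{\mathbb F_{q^n}}$. Two codes $\mathcal C,\mathcal C'\subseteq\mathcal L_{n,q}$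 are equivalent if there are invertible $h,g\in\mathcal L_{n,q}$ and a field automorphism $\sigma$ (acting on coefficients) with $\{h\circ f^\sigma\circ g\colon f\in\mathcal C\}=\mathcal C'$. *)

theory Defs
  imports Complex_Main "HOL-Library.Function_Algebras" "HOL-Computational_Algebra.Primes"
begin

text \<open>The field F_{q^n} is a finite field type 'a with CARD('a) = q^n.
Linearized polynomials are identified with the maps of 'a they induce.\<close>

definition prime_power :: "nat \<Rightarrow> bool" where
  "prime_power q \<longleftrightarrow> (\<exists>p m. prime p \<and> m > 0 \<and> q = p ^ m)"

text \<open>x^[j] = x^(q^j), exponent read modulo n (so negative j allowed).\<close>
definition qp :: "nat \<Rightarrow> nat \<Rightarrow> int \<Rightarrow> 'a::field \<Rightarrow> 'a" where
  "qp q n j x = x ^ (q ^ nat (j mod int n))"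

definition lin_eval :: "nat \<Rightarrow> nat \<Rightarrow> (nat \<Rightarrow> 'a::field) \<Rightarrow> 'a \<Rightarrow> 'a" where
  "lin_eval q n a = (\<lambda>x. \<Sum>i<n. a i * x ^ (q ^ i))"

definition Lnq :: "nat \<Rightarrow> nat \<Rightarrow> ('a::field \<Rightarrow> 'a) set" where
  "Lnq q n = {lin_eval q n a | a. True}"

definition fscale :: "'a::field \<Rightarrow> ('a \<Rightarrow> 'a) \<Rightarrow> ('a \<Rightarrow> 'a)" where
  "fscale c f = (\<lambda>x. c * f x)"

definition fpow :: "nat \<Rightarrow> nat \<Rightarrow> int \<Rightarrow> ('a::field \<Rightarrow> 'a) \<Rightarrow> ('a \<Rightarrow> 'a)" where
  "fpow q n j f = (\<lambda>x. qp q n j (f x))"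

definition Cpow :: "nat \<Rightarrow> nat \<Rightarrow> int \<Rightarrow> ('a::field \<Rightarrow> 'a) set \<Rightarrow> ('a \<Rightarrow> 'a) set" where
  "Cpow q n j C = fpow q n j ` C"

definition U1 :: "nat \<Rightarrow> nat \<Rightarrow> ('a::field \<Rightarrow> 'a) set" where
  "U1 q n = {lin_eval q n (\<lambda>i. \<alpha> ^ (q ^ i)) | \<alpha>. True}"

definition Gks :: "nat \<Rightarrow> nat \<Rightarrow> nat \<Rightarrow> int \<Rightarrow> ('a::field \<Rightarrow> 'a) set" where
  "Gks q n k s = module.span fscale {(\<lambda>x. qp q n (s * int j) x) | j. j < k}"

definition field_aut :: "('a::field \<Rightarrow> 'a) \<Rightarrow> bool" where
  "field_aut \<sigma> \<longleftrightarrow> bij \<sigma> \<and> (\<forall>x y. \<sigma> (x + y) = \<sigma> x + \<sigma> y) \<and>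
     (\<forall>x y. \<sigma> (x * y) = \<sigma> x * \<sigma> y) \<and> \<sigma> 1 = 1"

text \<open>Equivalence: C' = {h o f^sigma o g | f in C}, h,g invertible linearized,
 sigma acting on coefficients.\<close>
definition code_equiv :: "nat \<Rightarrow> nat \<Rightarrow> ('a::field \<Rightarrow> 'a) set \<Rightarrow> ('a \<Rightarrow> 'a) set \<Rightarrow> bool" where
  "code_equiv q n C C' \<longleftrightarrow>
    (\<exists>h g \<sigma>. h \<in> Lnq q n \<and> g \<in> Lnq q n \<and> bij h \<and> bij g \<and> field_aut \<sigma> \<and>
       C' = {h \<circ> lin_eval q n (\<sigma> \<circ> a) \<circ> g | a. lin_eval q n a \<in> C})"

end

theory Submission
  imports Defs "HOL-Number_Theory.Cong" "HOL-Combinatorics.Cycles"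
    "HOL-Computational_Algebra.Polynomial"
begin

text \<open>Put \<open>C\<^sub>i = C \<inter> C\<^bsup>[s]\<^esup> \<inter> \<dots> \<inter> C\<^bsup>[is]\<^esup>\<close>. By Grassmann's formula
  \<open>dim C\<^sub>i\<close> is convex in \<open>i\<close>. A non-zero subspace of \<open>C\<close> stable under \<open>f \<mapsto> f\<^bsup>[s]\<^esup>\<close> is,
  as \<open>gcd(s,n) = 1\<close>, stable under \<open>f \<mapsto> f\<^bsup>[1]\<^esup>\<close>, so it contains a non-zero sum
  \<open>\<Sum>\<^sub>j (c w)\<^bsup>[j]\<^esup>\<close>; its values are traces, so it lies in \<open>U\<^sub>1\<close>, contradicting
  \<open>C \<inter> U\<^sub>1 = {0}\<close>.
  Hence \<open>dim C\<^sub>i\<close> decreases strictly, and \<open>dim C - dim C\<^sub>1 = 1\<close> forces \<open>dim C\<^sub>i = k - i\<close>.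
  A non-zero \<open>g \<in> C\<^sub>k\<^sub>-\<^sub>1\<close> gives \<open>p = g\<^bsup>[-s(k-1)]\<^esup>\<close> with \<open>p\<^bsup>[sj]\<^esup> \<in> C\<close> for \<open>j < k\<close>; these
  are independent by the same stability argument, hence span \<open>C\<close>. If \<open>C\<close> contains an
  invertible \<open>f\<close>, then \<open>p\<close> is injective (\<open>p x = p y\<close> forces \<open>f x = f y\<close>), and right
  composition with \<open>p\<^sup>-\<^sup>1\<close> maps \<open>C\<close> onto \<open>G\<^sub>k\<^sub>,\<^sub>s\<close>.\<close>

interpretation fv: vector_space "fscale :: 'a::field \<Rightarrow> ('a \<Rightarrow> 'a) \<Rightarrow> _"
  by unfold_locales (auto simp: fscale_def fun_eq_iff algebra_simps)

definition fun_basis :: "('a::{finite,field} \<Rightarrow> 'a) set" where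
  "fun_basis = (SOME B. fv.independent B \<and> fv.span B = UNIV)"

lemma independent_span_fun_basis:
  "fv.independent (fun_basis :: ('a::{finite,field} \<Rightarrow> 'a) set) \<and> fv.span (fun_basis :: ('a \<Rightarrow> 'a) set) = UNIV"
  unfolding fun_basis_def
proof (rule someI_ex)
  obtain B :: "('a \<Rightarrow> 'a) set" where indep: "fv.independent B" and span: "UNIV \<subseteq> fv.span B"
    using fv.maximal_independent_subset[of UNIV] by blast
  show "\<exists>B :: ('a \<Rightarrow> 'a) set. fv.independent B \<and> fv.span B = UNIV"
    using indep top_le[OF span] by blast
qed

interpretation ffv: finite_dimensional_vector_space
  "fscale :: 'a::{finite,field} \<Rightarrow> ('a \<Rightarrow> 'a) \<Rightarrow> _" fun_basis
  by unfold_locales (simp_all add: independent_span_fun_basis)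

text \<open>The library's \<open>finite_field_power_card_eq_same\<close> is stated for the class \<open>finite_field\<close>,
  which is not implied by the sort \<open>{finite,field}\<close> used here.\<close>

lemma finite_field_power_card_eq_self:
  fixes x :: "'a::{finite,field}"
  shows "x ^ card (UNIV :: 'a set) = x"
proof (cases "x = 0")
  case True
  then show ?thesis by (simp add: finite_UNIV_card_ge_0)
next
  case False
  let ?U = "UNIV - {0 :: 'a}"
  have "(\<Prod>y\<in>?U. x * y) = (\<Prod>y\<in>?U. y)"
    by (rule prod.reindex_bij_witness[of _ "\<lambda>y. y / x" "\<lambda>y. x * y"]) (use False in auto)
  then have "x ^ (card (UNIV :: 'a set) - 1) * \<Prod>?U = \<Prod>?U"
    by (simp add: prod.distrib)
  then have "x ^ (card (UNIV :: 'a set) - 1) = 1" by simp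
  then have "x * x ^ (card (UNIV :: 'a set) - 1) = x" by simp
  then show ?thesis
    by (metis Suc_diff_1 finite_UNIV_card_ge_0 finite power_Suc)
qed

lemma finite_field_of_nat_card_eq_0: "of_nat (card (UNIV :: 'a::{finite,field} set)) = (0 :: 'a)"
proof -
  have "(\<Sum>x\<in>UNIV. x + 1) = (\<Sum>x\<in>(UNIV :: 'a set). x)"
    by (rule sum.reindex_bij_witness[of _ "\<lambda>y. y - 1" "\<lambda>y. y + 1"]) auto
  then show ?thesis by (simp add: sum.distrib)
qed

lemma sum_fun_apply: "(\<Sum>i\<in>A. f i) x = (\<Sum>i\<in>A. f i x :: 'b::comm_monoid_add)"
  by (induction A rule: infinite_finite_induct) auto

lemma sum_lessThan_rotate: "(\<Sum>i<n. g (Suc i mod n)) = (\<Sum>i<n. g i :: 'b::comm_monoid_add)"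
proof (cases n)
  case (Suc m)
  have "(\<Sum>i<Suc m. g (Suc i mod Suc m)) = g 0 + (\<Sum>i<m. g (Suc i))"
    by (simp add: lessThan_Suc)
  also have "\<dots> = (\<Sum>i<Suc m. g i)"
    by (rule sum.lessThan_Suc_shift[symmetric])
  finally show ?thesis using Suc by simp
qed simp

lemma semilinear_image_span:
  fixes L :: "('a::field \<Rightarrow> 'a) \<Rightarrow> ('a \<Rightarrow> 'a)"
  assumes add: "\<And>f g. L (f + g) = L f + L g"
    and scale: "\<And>c f. L (fscale c f) = fscale (\<sigma> c) (L f)" and surj: "surj \<sigma>"
  shows "L ` fv.span S = fv.span (L ` S)"
proof
  have L0: "L 0 = 0" using add[of 0 0] by simp
  show "L ` fv.span S \<subseteq> fv.span (L ` S)"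
  proof clarify
    fix x assume "x \<in> fv.span S"
    then show "L x \<in> fv.span (L ` S)"
    proof (induction rule: fv.span_induct_alt)
      case base
      then show ?case by (metis L0 fv.span_zero)
    next
      case (step c x y)
      have "L (fscale c x + y) = fscale (\<sigma> c) (L x) + L y"
        by (simp only: add scale)
      then show ?case
        using step by (metis fv.span_add fv.span_scale fv.span_base imageI)
    qed
  qed
  show "fv.span (L ` S) \<subseteq> L ` fv.span S"
  proof (rule fv.span_minimal)
    show "L ` S \<subseteq> L ` fv.span S" using fv.span_base by blast
    show "fv.subspace (L ` fv.span S)"
      unfolding fv.subspace_def
    proof (intro conjI ballI allI)
      show "0 \<in> L ` fv.span S" using L0 fv.span_zero by (metis image_eqI)
    next
      fix a b assume "a \<in> L ` fv.span S" "b \<in> L ` fv.span S"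
      then show "a + b \<in> L ` fv.span S"
        by (auto simp: add[symmetric] intro!: imageI fv.span_add)
    next
      fix c a assume "a \<in> L ` fv.span S"
      then obtain x where x: "x \<in> fv.span S" "a = L x" by blast
      obtain c' where "c = \<sigma> c'" using surj by (metis surjD)
      then have "fscale c a = L (fscale c' x)" using x scale by simp
      then show "fscale c a \<in> L ` fv.span S" using x fv.span_scale by blast
    qed
  qed
qed

lemma semilinear_image_independent:
  fixes L :: "('a::field \<Rightarrow> 'a) \<Rightarrow> ('a \<Rightarrow> 'a)"
  assumes add: "\<And>f g. L (f + g) = L f + L g"
    and scale: "\<And>c f. L (fscale c f) = fscale (\<sigma> c) (L f)" and surj: "surj \<sigma>"
    and inj: "inj L" and indep: "fv.independent S"
  shows "fv.independent (L ` S)"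
proof
  assume "fv.dependent (L ` S)"
  then obtain a where a: "a \<in> S" "L a \<in> fv.span (L ` S - {L a})"
    unfolding fv.dependent_def by blast
  have "L ` S - {L a} = L ` (S - {a})" using inj by (auto simp: inj_eq)
  then have "L a \<in> L ` fv.span (S - {a})"
    using a semilinear_image_span[OF add scale surj] by simp
  then have "a \<in> fv.span (S - {a})" using inj by (auto simp: inj_eq)
  then show False using indep a unfolding fv.dependent_def by blast
qed

lemma semilinear_image_dim:
  fixes L :: "('a::field \<Rightarrow> 'a) \<Rightarrow> ('a \<Rightarrow> 'a)"
  assumes add: "\<And>f g. L (f + g) = L f + L g"
    and scale: "\<And>c f. L (fscale c f) = fscale (\<sigma> c) (L f)" and surj: "surj \<sigma>"
    and inj: "inj L"
  shows "fv.dim (L ` V) = fv.dim V"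
proof -
  obtain B where B: "B \<subseteq> V" "fv.independent B" "V \<subseteq> fv.span B" "card B = fv.dim V"
    using fv.basis_exists by blast
  show ?thesis
  proof (rule fv.dim_unique)
    show "L ` B \<subseteq> L ` V" using B by blast
    show "L ` V \<subseteq> fv.span (L ` B)" using B semilinear_image_span[OF add scale surj] by blast
    show "fv.independent (L ` B)" using semilinear_image_independent[OF add scale surj inj B(2)] .
    show "card (L ` B) = fv.dim V" using B inj by (simp add: card_image inj_on_subset)
  qed
qed

locale qn_field =
  fixes q n :: nat and field_type :: "'a::{finite,field} itself"
  assumes prime_power_q: "prime_power q"
    and n_pos: "n \<ge> 1"
    and card_field: "card (UNIV :: 'a set) = q ^ n"
begin

lemma q_ge_2: "q \<ge> 2"
  using prime_power_q unfolding prime_power_def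
  by (metis one_less_power prime_gt_1_nat Suc_leI one_add_one plus_1_eq_Suc)

lemma prime_CHAR: "prime CHAR('a)"
  by (rule prime_CHAR_semidom[OF finite_imp_CHAR_pos]) simp

lemma q_power_of_CHAR: "\<exists>m. q = CHAR('a) ^ m"
proof -
  obtain p m where p: "prime p" and q: "q = p ^ m"
    using prime_power_q unfolding prime_power_def by blast
  have "CHAR('a) dvd (p ^ m) ^ n"
    using finite_field_of_nat_card_eq_0[where 'a = 'a] card_field q
    by (metis of_nat_eq_0_iff_char_dvd)
  then have "CHAR('a) = p"
    using prime_CHAR p by (meson prime_dvd_power primes_dvd_imp_eq)
  then show ?thesis using q by blast
qed

lemma frobenius_add: "(x + y :: 'a) ^ q ^ j = x ^ q ^ j + y ^ q ^ j"
proof -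
  obtain m where "q = CHAR('a) ^ m" using q_power_of_CHAR by blast
  then show ?thesis
    by (intro freshmans_dream'[OF prime_CHAR, where n = "m * j"]) (simp add: power_mult)
qed

lemma frobenius_sum: "(\<Sum>i\<in>A. f i) ^ q ^ j = (\<Sum>i\<in>A. f i ^ q ^ j :: 'a)"
proof -
  obtain m where "q = CHAR('a) ^ m" using q_power_of_CHAR by blast
  then show ?thesis
    by (intro freshmans_dream_sum'[OF prime_CHAR, where n = "m * j"]) (simp add: power_mult)
qed

lemma power_q_power_n [simp]: "(x :: 'a) ^ q ^ n = x"
  using finite_field_power_card_eq_self[of x] card_field by simp

lemma power_q_power_mod: "(x :: 'a) ^ q ^ j = x ^ q ^ (j mod n)"
proof -
  have periodic: "(y :: 'a) ^ q ^ (n * m) = y" for y m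
    by (induction m) (simp_all add: power_add power_mult)
  have "x ^ q ^ j = x ^ (q ^ (n * (j div n)) * q ^ (j mod n))"
    by (simp flip: power_add)
  also have "\<dots> = (x ^ q ^ (n * (j div n))) ^ q ^ (j mod n)"
    by (rule power_mult)
  also have "\<dots> = x ^ q ^ (j mod n)"
    by (simp only: periodic)
  finally show ?thesis .
qed

lemma qp_nat: "i < n \<Longrightarrow> qp q n (int i) (x :: 'a) = x ^ q ^ i"
  by (simp add: qp_def)

lemma qp_0 [simp]: "qp q n 0 (x :: 'a) = x"
  by (simp add: qp_def)

lemma qp_zero [simp]: "qp q n j (0 :: 'a) = 0"
  using q_ge_2 by (simp add: qp_def)

lemma qp_add: "qp q n j (x + y :: 'a) = qp q n j x + qp q n j y"
  by (simp add: qp_def frobenius_add)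

lemma qp_mult: "qp q n j (x * y :: 'a) = qp q n j x * qp q n j y"
  by (simp add: qp_def power_mult_distrib)

lemma qp_qp: "qp q n a (qp q n b (x :: 'a)) = qp q n (a + b) x"
proof -
  have "int ((nat (b mod int n) + nat (a mod int n)) mod n) = (b mod int n + a mod int n) mod int n"
    using n_pos by (simp add: zmod_int)
  also have "\<dots> = (a + b) mod int n"
    by (simp add: mod_add_eq add.commute)
  finally have exp: "(nat (b mod int n) + nat (a mod int n)) mod n = nat ((a + b) mod int n)"
    by (metis nat_int)
  have "qp q n a (qp q n b x) = x ^ q ^ (nat (b mod int n) + nat (a mod int n))"
    by (simp add: qp_def power_add power_mult)
  also have "\<dots> = qp q n (a + b) x"
    by (subst power_q_power_mod) (simp add: qp_def exp)
  finally show ?thesis .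
qed

lemma surj_qp: "surj (qp q n j :: 'a \<Rightarrow> 'a)"
  by (rule surjI[of _ "qp q n (- j)"]) (simp add: qp_qp)

lemma fpow_add: "fpow q n j (f + g) = fpow q n j f + fpow q n j (g :: 'a \<Rightarrow> 'a)"
  by (simp add: fpow_def fun_eq_iff qp_add)

lemma fpow_fscale: "fpow q n j (fscale c f) = fscale (qp q n j c) (fpow q n j (f :: 'a \<Rightarrow> 'a))"
  by (simp add: fpow_def fscale_def fun_eq_iff qp_mult)

lemma fpow_fpow: "fpow q n a (fpow q n b (f :: 'a \<Rightarrow> 'a)) = fpow q n (a + b) f"
  by (simp add: fpow_def fun_eq_iff qp_qp)

lemma fpow_0 [simp]: "fpow q n 0 (f :: 'a \<Rightarrow> 'a) = f"
  by (simp add: fpow_def)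

lemma fpow_zero [simp]: "fpow q n j (0 :: 'a \<Rightarrow> 'a) = 0"
  by (simp add: fpow_def fun_eq_iff)

lemma fpow_cong_mod: "a mod int n = b mod int n \<Longrightarrow> fpow q n a (f :: 'a \<Rightarrow> 'a) = fpow q n b f"
  by (simp add: fpow_def qp_def)

lemma funpow_fpow: "(fpow q n t ^^ i) (f :: 'a \<Rightarrow> 'a) = fpow q n (t * int i) f"
  by (induction i) (simp_all add: fpow_fpow algebra_simps)

lemma inj_fpow: "inj (fpow q n j :: ('a \<Rightarrow> 'a) \<Rightarrow> _)"
  by (rule inj_on_inverseI[of _ "fpow q n (- j)"]) (simp add: fpow_fpow)

lemma fpow_span: "fpow q n j ` fv.span S = fv.span (fpow q n j ` (S :: ('a \<Rightarrow> 'a) set))"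
  by (rule semilinear_image_span[OF fpow_add fpow_fscale surj_qp])

lemma dim_Cpow: "fv.dim (Cpow q n j (V :: ('a \<Rightarrow> 'a) set)) = fv.dim V"
  unfolding Cpow_def by (rule semilinear_image_dim[OF fpow_add fpow_fscale surj_qp inj_fpow])

lemma subspace_Cpow: "fv.subspace V \<Longrightarrow> fv.subspace (Cpow q n j (V :: ('a \<Rightarrow> 'a) set))"
  unfolding Cpow_def by (metis fpow_span fv.span_eq_iff fv.subspace_span)

lemma lin_eval_eq_0_imp_coeff_eq_0:
  assumes zero: "lin_eval q n a = (0 :: 'a \<Rightarrow> 'a)" and i: "i < n"
  shows "a i = 0"
proof -
  define P where "P = (\<Sum>i<n. monom (a i) (q ^ i))"
  have coeff_P: "coeff P m = (\<Sum>i<n. if q ^ i = m then a i else 0)" for m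
    by (simp add: P_def coeff_sum coeff_monom)
  have "P = 0"
  proof (rule ccontr)
    assume "P \<noteq> 0"
    then have "card {x. poly P x = 0} \<le> degree P" by (rule card_poly_roots_bound)
    moreover have "{x. poly P x = 0} = UNIV"
      using zero by (auto simp: P_def poly_sum poly_monom lin_eval_def fun_eq_iff)
    moreover have "degree P \<le> q ^ (n - 1)"
    proof (rule degree_le, intro allI impI)
      fix m assume "q ^ (n - 1) < m"
      moreover have "q ^ i \<le> q ^ (n - 1)" if "i < n" for i
        using that q_ge_2 by (intro power_increasing) auto
      ultimately show "coeff P m = 0"
        by (force simp: coeff_P intro!: sum.neutral)
    qed
    moreover have "q ^ (n - 1) < q ^ n"
      using q_ge_2 n_pos by (intro power_strict_increasing) auto
    ultimately show False using card_field by simp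
  qed
  moreover have "coeff P (q ^ i) = a i"
    using i q_ge_2 by (simp add: coeff_P power_inject_exp)
  ultimately show ?thesis by simp
qed

lemma lin_eval_coeff_unique:
  assumes "lin_eval q n a = (lin_eval q n b :: 'a \<Rightarrow> 'a)" and "i < n"
  shows "a i = b i"
proof -
  have "lin_eval q n (\<lambda>i. a i - b i) = (0 :: 'a \<Rightarrow> 'a)"
    using assms(1) by (simp add: lin_eval_def fun_eq_iff algebra_simps sum_subtractf)
  then show ?thesis
    using lin_eval_eq_0_imp_coeff_eq_0 assms(2) by fastforce
qed

lemma lin_eval_power_q:
  defines "pred \<equiv> \<lambda>r. if r = 0 then n - 1 else r - 1"
  shows "lin_eval q n a (x :: 'a) ^ q = lin_eval q n (\<lambda>r. a (pred r) ^ q) x"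
proof -
  have pred: "pred (Suc i mod n) = i" if "i < n" for i
    using that by (cases "Suc i = n") (auto simp: pred_def)
  have "lin_eval q n a x ^ q = (\<Sum>i<n. a i ^ q * x ^ q ^ Suc i)"
    by (simp add: lin_eval_def frobenius_sum[where j = 1, unfolded power_one_right]
        power_mult_distrib power_mult[symmetric] mult.commute)
  also have "\<dots> = (\<Sum>i<n. a (pred (Suc i mod n)) ^ q * x ^ q ^ (Suc i mod n))"
    by (intro sum.cong refl) (metis pred lessThan_iff power_q_power_mod)
  also have "\<dots> = lin_eval q n (\<lambda>r. a (pred r) ^ q) x"
    unfolding lin_eval_def by (rule sum_lessThan_rotate)
  finally show ?thesis .
qed

lemma fixed_by_power_q_imp_U1:
  assumes "f \<in> Lnq q n" and fixed: "\<And>x. f x ^ q = (f x :: 'a)"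
  shows "f \<in> U1 q n"
proof -
  obtain a where f: "f = lin_eval q n a" using assms(1) unfolding Lnq_def by blast
  have "lin_eval q n a = lin_eval q n (\<lambda>r. a (if r = 0 then n - 1 else r - 1) ^ q)"
    using fixed lin_eval_power_q by (auto simp: f fun_eq_iff)
  then have rec: "a (Suc i) = a i ^ q" if "Suc i < n" for i
    using lin_eval_coeff_unique that by fastforce
  have coeff: "a i = a 0 ^ q ^ i" if "i < n" for i
    using that by (induction i) (simp_all add: rec power_mult[symmetric] mult.commute)
  have "f = lin_eval q n (\<lambda>i. a 0 ^ q ^ i)"
    unfolding f lin_eval_def by (intro ext sum.cong refl) (metis coeff lessThan_iff)
  then show ?thesis unfolding U1_def by blast
qed

lemma trace_power_q: "lin_eval q n (\<lambda>_. 1) (z :: 'a) ^ q = lin_eval q n (\<lambda>_. 1) z"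
  by (simp add: lin_eval_power_q)

lemma trace_nonzero: "\<exists>z :: 'a. lin_eval q n (\<lambda>_. 1) z \<noteq> 0"
  using lin_eval_eq_0_imp_coeff_eq_0[of "\<lambda>_. 1" 0] n_pos by (auto simp: fun_eq_iff)

lemma closed_under_all_fpow:
  assumes closed: "\<And>v. v \<in> W \<Longrightarrow> fpow q n t v \<in> W" and coprime: "gcd t (int n) = 1"
    and v: "v \<in> (W :: ('a \<Rightarrow> 'a) set)"
  shows "fpow q n (int j) v \<in> W"
proof -
  have iterate: "(h ^^ i) w \<in> W" if "\<And>w. w \<in> W \<Longrightarrow> h w \<in> W" "w \<in> W" for h i w
    using that by (induction i) auto
  obtain u where "[t * u = 1] (mod int n)"
    using cong_solve_coprime_int[of t "int n"] coprime by (auto simp: coprime_iff_gcd_eq_1)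
  then have "1 mod int n = (t * int (nat (u mod int n))) mod int n"
    using n_pos by (simp add: cong_def mod_mult_right_eq)
  then have frobenius_iterate: "fpow q n 1 w = (fpow q n t ^^ nat (u mod int n)) w" for w :: "'a \<Rightarrow> 'a"
    unfolding funpow_fpow by (rule fpow_cong_mod)
  have closed_1: "fpow q n 1 w \<in> W" if "w \<in> W" for w
    unfolding frobenius_iterate by (rule iterate[OF closed that])
  have "(fpow q n 1 ^^ j) v \<in> W"
    by (rule iterate[OF closed_1 v])
  then show ?thesis by (simp add: funpow_fpow)
qed

lemma invariant_subspace_meets_U1:
  assumes W: "fv.subspace W" "W \<subseteq> Lnq q n"
    and closed: "\<And>v. v \<in> W \<Longrightarrow> fpow q n t v \<in> W" and coprime: "gcd t (int n) = 1"
    and w: "w \<in> W" "w \<noteq> (0 :: 'a \<Rightarrow> 'a)"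
  shows "\<exists>u\<in>W. u \<in> U1 q n \<and> u \<noteq> 0"
proof -
  obtain x0 where x0: "w x0 \<noteq> 0" using w(2) by (auto simp: fun_eq_iff)
  obtain z :: 'a where z: "lin_eval q n (\<lambda>_. 1) z \<noteq> 0" using trace_nonzero by blast
  define c where "c = z / w x0"
  define u where "u = (\<Sum>j<n. fpow q n (int j) (fscale c w))"
  have u_apply: "u x = lin_eval q n (\<lambda>_. 1) (c * w x)" for x
    unfolding u_def sum_fun_apply lin_eval_def
    by (rule sum.cong) (simp_all add: fpow_def fscale_def qp_nat)
  have "fscale c w \<in> W" using W(1) w(1) by (rule fv.subspace_scale)
  then have "u \<in> W"
    unfolding u_def using closed_under_all_fpow[OF closed coprime]
    by (intro fv.subspace_sum[OF W(1)]) blast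
  moreover have "u \<in> U1 q n"
    using \<open>u \<in> W\<close> W(2) by (intro fixed_by_power_q_imp_U1) (auto simp: u_apply trace_power_q)
  moreover have "u x0 \<noteq> 0" using x0 z by (simp add: u_apply c_def)
  ultimately show ?thesis by force
qed

lemma dim_Int_Cpow_convex:
  fixes t :: int and V :: "('a \<Rightarrow> 'a) set"
  assumes V: "fv.subspace V"
  defines "W \<equiv> V \<inter> Cpow q n t V"
  shows "2 * fv.dim W \<le> fv.dim V + fv.dim (W \<inter> Cpow q n t W)"
proof -
  have W: "fv.subspace W"
    unfolding W_def using V by (simp add: fv.subspace_inter subspace_Cpow)
  let ?S = "{x + y |x y. x \<in> W \<and> y \<in> Cpow q n t W}"
  have "?S \<subseteq> Cpow q n t V"
  proof clarify
    fix x y assume "x \<in> W" "y \<in> Cpow q n t W"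
    then have "x \<in> Cpow q n t V" "y \<in> Cpow q n t V"
      unfolding W_def Cpow_def by auto
    then show "x + y \<in> Cpow q n t V"
      by (rule fv.subspace_add[OF subspace_Cpow[OF V]])
  qed
  then have "fv.dim ?S \<le> fv.dim (Cpow q n t V)"
    by (rule ffv.dim_subset)
  moreover have "fv.dim ?S + fv.dim (W \<inter> Cpow q n t W) = fv.dim W + fv.dim (Cpow q n t W)"
    by (rule ffv.dim_sums_Int[OF W subspace_Cpow[OF W]])
  ultimately show ?thesis
    unfolding dim_Cpow by linarith
qed

lemma Lnq_monomial: "(\<lambda>x :: 'a. c * x ^ q ^ m) \<in> Lnq q n"
proof -
  have "lin_eval q n (\<lambda>i. if i = m mod n then c else 0) x = c * x ^ q ^ m" for x :: 'a
  proof -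
    have "lin_eval q n (\<lambda>i. if i = m mod n then c else 0) x
        = (\<Sum>i<n. if i = m mod n then c * x ^ q ^ i else 0)"
      unfolding lin_eval_def by (rule sum.cong) auto
    also have "\<dots> = c * x ^ q ^ (m mod n)"
      using n_pos by (subst sum.delta) auto
    finally show ?thesis by (simp flip: power_q_power_mod)
  qed
  then show ?thesis
    unfolding Lnq_def by (intro CollectI exI[of _ "\<lambda>i. if i = m mod n then c else 0"]) auto
qed

lemma Lnq_add: "f \<in> Lnq q n \<Longrightarrow> g \<in> Lnq q n \<Longrightarrow> f + (g :: 'a \<Rightarrow> 'a) \<in> Lnq q n"
proof -
  assume "f \<in> Lnq q n" "g \<in> Lnq q n"
  then obtain a b where "f = lin_eval q n a" "g = lin_eval q n b" unfolding Lnq_def by blast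
  then have "f + g = lin_eval q n (\<lambda>i. a i + b i)"
    by (simp add: lin_eval_def fun_eq_iff sum.distrib distrib_right)
  then show ?thesis unfolding Lnq_def by blast
qed

lemma Lnq_zero: "(0 :: 'a \<Rightarrow> 'a) \<in> Lnq q n"
proof -
  have "(0 :: 'a \<Rightarrow> 'a) = lin_eval q n (\<lambda>i. 0)" by (simp add: lin_eval_def fun_eq_iff)
  then show ?thesis unfolding Lnq_def by blast
qed

lemma Lnq_sum:
  "finite A \<Longrightarrow> (\<And>i. i \<in> A \<Longrightarrow> F i \<in> Lnq q n) \<Longrightarrow>
    (\<Sum>i\<in>A. F i) \<in> (Lnq q n :: ('a \<Rightarrow> 'a) set)"
  by (induction A rule: finite_induct) (auto intro: Lnq_zero Lnq_add)

lemma Lnq_comp: "f \<in> Lnq q n \<Longrightarrow> g \<in> Lnq q n \<Longrightarrow> f \<circ> (g :: 'a \<Rightarrow> 'a) \<in> Lnq q n"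
proof -
  assume "f \<in> Lnq q n" "g \<in> Lnq q n"
  then obtain a b where ab: "f = lin_eval q n a" "g = lin_eval q n b" unfolding Lnq_def by blast
  have "f \<circ> g = (\<Sum>i<n. \<Sum>j<n. (\<lambda>x. (a i * b j ^ q ^ i) * x ^ q ^ (j + i)))"
  proof
    fix x :: 'a
    have "(f \<circ> g) x = (\<Sum>i<n. a i * (\<Sum>j<n. b j * x ^ q ^ j) ^ q ^ i)"
      unfolding ab lin_eval_def by simp
    also have "\<dots> = (\<Sum>i<n. \<Sum>j<n. (a i * b j ^ q ^ i) * x ^ q ^ (j + i))"
      by (simp add: frobenius_sum sum_distrib_left power_mult_distrib power_mult[symmetric]
          power_add mult.assoc)
    finally show "(f \<circ> g) x = (\<Sum>i<n. \<Sum>j<n. (\<lambda>x. (a i * b j ^ q ^ i) * x ^ q ^ (j + i))) x"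
      by (simp add: sum_fun_apply)
  qed
  also have "\<dots> \<in> Lnq q n"
    by (intro Lnq_sum Lnq_monomial) auto
  finally show ?thesis .
qed

lemma Lnq_id: "(id :: 'a \<Rightarrow> 'a) \<in> Lnq q n"
  using Lnq_monomial[of 1 0] by (simp add: id_def)

lemma Lnq_funpow: "p \<in> Lnq q n \<Longrightarrow> p ^^ N \<in> (Lnq q n :: ('a \<Rightarrow> 'a) set)"
  by (induction N) (auto intro: Lnq_id Lnq_comp)

lemma Lnq_inv:
  assumes p: "p \<in> Lnq q n" "bij (p :: 'a \<Rightarrow> 'a)"
  shows "inv p \<in> Lnq q n"
proof -
  have "permutation p" using p(2) by (simp add: permutation)
  then obtain N where N: "p ^^ N = id" "N > 0" by (rule permutation_is_nilpotent)
  then have "p \<circ> p ^^ (N - 1) = id" "p ^^ (N - 1) \<circ> p = id"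
    by (metis Suc_pred' funpow.simps(2), metis Suc_pred' funpow_Suc_right)
  then have "inv p = p ^^ (N - 1)" by (rule inv_unique_comp)
  then show ?thesis using Lnq_funpow[OF p(1)] by simp
qed

end

definition shifts :: "nat \<Rightarrow> nat \<Rightarrow> int \<Rightarrow> nat \<Rightarrow> ('a::field \<Rightarrow> 'a) \<Rightarrow> ('a \<Rightarrow> 'a) set" where
  "shifts q n s m p = {fpow q n (s * int j) p | j. j < m}"

lemma finite_shifts: "finite (shifts q n s m p)"
  unfolding shifts_def setcompr_eq_image by simp

lemma inj_of_inj_in_span_shifts:
  assumes "f \<in> fv.span (shifts q n s m p)" and "inj f"
  shows "inj p"
proof
  fix x y assume "p x = p y"
  let ?Z = "{h. h x = h y}"
  have "fv.subspace ?Z" unfolding fv.subspace_def fscale_def by simp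
  moreover have "shifts q n s m p \<subseteq> ?Z"
    using \<open>p x = p y\<close> by (auto simp: shifts_def fpow_def)
  ultimately have "f \<in> ?Z" using assms(1) fv.span_minimal by blast
  then show "x = y" using assms(2) by (simp add: inj_eq)
qed

context qn_field
begin

lemma self_in_shifts: "0 < m \<Longrightarrow> p \<in> shifts q n s m (p :: 'a \<Rightarrow> 'a)"
  unfolding shifts_def by (intro CollectI exI[of _ 0]) simp

lemma code_equiv_Gks_if_span_shifts:
  assumes C: "C \<subseteq> Lnq q n" "C = fv.span (shifts q n s k p)"
    and p: "p \<in> Lnq q n" "bij (p :: 'a \<Rightarrow> 'a)"
  shows "code_equiv q n C (Gks q n k s)"
proof -
  let ?R = "\<lambda>f :: 'a \<Rightarrow> 'a. f \<circ> inv p"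
  have shift_comp: "fpow q n (s * int j) p \<circ> inv p = qp q n (s * int j)" for j
    using p(2) by (simp add: fpow_def fun_eq_iff bij_is_surj surj_f_inv_f)
  have "?R ` C = fv.span (?R ` shifts q n s k p)"
    unfolding C(2) by (rule semilinear_image_span[where \<sigma> = id]) (auto simp: fscale_def)
  also have "?R ` shifts q n s k p = {qp q n (s * int j) | j. j < k}"
    unfolding shifts_def setcompr_eq_image image_comp
    by (rule image_cong[OF refl]) (simp add: shift_comp)
  finally have "Gks q n k s = ?R ` C" unfolding Gks_def by (rule sym)
  also have "\<dots> = {id \<circ> lin_eval q n (id \<circ> a) \<circ> inv p | a. lin_eval q n a \<in> C}"
    using C(1) unfolding Lnq_def by auto
  finally show ?thesis
    unfolding code_equiv_def using Lnq_id Lnq_inv[OF p] p(2)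
    by (intro exI[of _ id] exI[of _ "inv p"]) (auto simp: field_aut_def bij_imp_bij_inv)
qed

end

locale shift_code = qn_field q n field_type
  for q n :: nat and field_type :: "'a::{finite,field} itself" +
  fixes C :: "('a \<Rightarrow> 'a) set" and s :: int and k :: nat
  assumes C_Lnq: "C \<subseteq> Lnq q n"
    and subspace_C: "fv.subspace C"
    and dim_C: "fv.dim C = k"
    and k_pos: "0 < k"
    and dim_C_Int_Cpow: "fv.dim (C \<inter> Cpow q n s C) = k - 1"
    and C_Int_U1: "C \<inter> U1 q n = {0}"
    and coprime_s: "gcd s (int n) = 1"
begin

lemma invariant_subspace_trivial:
  assumes W: "fv.subspace W" "W \<subseteq> C"
    and closed: "\<And>v. v \<in> W \<Longrightarrow> fpow q n t v \<in> W" and coprime: "gcd t (int n) = 1"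
  shows "W \<subseteq> {0}"
proof
  fix w assume "w \<in> W"
  show "w \<in> {0}"
  proof (rule ccontr)
    assume "w \<notin> {0}"
    then obtain u where "u \<in> W" "u \<in> U1 q n" "u \<noteq> 0"
      using invariant_subspace_meets_U1[OF W(1) _ closed coprime \<open>w \<in> W\<close>] W(2) C_Lnq by blast
    then show False using W(2) C_Int_U1 by blast
  qed
qed

lemma Cpow_stable_subspace_trivial:
  assumes W: "fv.subspace W" "W \<subseteq> C" and stable: "W \<subseteq> Cpow q n s W"
  shows "W \<subseteq> {0}"
proof (rule invariant_subspace_trivial[OF W])
  show "gcd (- s) (int n) = 1" using coprime_s by simp
  fix v assume "v \<in> W"
  then obtain h where "h \<in> W" "v = fpow q n s h" using stable unfolding Cpow_def by blast
  then show "fpow q n (- s) v \<in> W" by (simp add: fpow_fpow)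
qed

primrec inter_shifts :: "nat \<Rightarrow> ('a \<Rightarrow> 'a) set" where
  "inter_shifts 0 = C"
| "inter_shifts (Suc i) = inter_shifts i \<inter> Cpow q n s (inter_shifts i)"

lemma subspace_inter_shifts: "fv.subspace (inter_shifts i)"
  by (induction i) (simp_all add: subspace_C fv.subspace_inter subspace_Cpow)

lemma inter_shifts_Suc_subset: "inter_shifts (Suc i) \<subseteq> inter_shifts i"
  by auto

lemma inter_shifts_subset_C: "inter_shifts i \<subseteq> C"
  by (induction i) auto

lemma inter_shifts_unshift_in_C:
  "f \<in> inter_shifts i \<Longrightarrow> j \<le> i \<Longrightarrow> fpow q n (- s * int j) f \<in> C"
proof (induction i arbitrary: f j)
  case 0
  then show ?case by simp
next
  case (Suc i)
  show ?case
  proof (cases j)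
    case 0
    then show ?thesis using Suc.prems(1) inter_shifts_subset_C by auto
  next
    case (Suc j')
    obtain h where h: "h \<in> inter_shifts i" "f = fpow q n s h"
      using Suc.prems(1) by (auto simp: Cpow_def)
    have "fpow q n (- s * int j) f = fpow q n (- s * int j') h"
      using h(2) Suc by (simp add: fpow_fpow algebra_simps)
    then show ?thesis using Suc.IH[OF h(1)] Suc.prems(2) Suc by simp
  qed
qed

lemma dim_inter_shifts_Suc_less:
  assumes "\<not> inter_shifts i \<subseteq> {0}"
  shows "fv.dim (inter_shifts (Suc i)) < fv.dim (inter_shifts i)"
proof -
  have "fv.dim (inter_shifts (Suc i)) \<le> fv.dim (inter_shifts i)"
    by (rule ffv.dim_subset[OF inter_shifts_Suc_subset])
  moreover have "fv.dim (inter_shifts (Suc i)) \<noteq> fv.dim (inter_shifts i)"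
  proof
    assume "fv.dim (inter_shifts (Suc i)) = fv.dim (inter_shifts i)"
    then have "inter_shifts (Suc i) = inter_shifts i"
      by (intro ffv.subspace_dim_equal subspace_inter_shifts inter_shifts_Suc_subset) simp
    then have "inter_shifts i \<inter> Cpow q n s (inter_shifts i) = inter_shifts i"
      by (simp only: inter_shifts.simps(2))
    then have "inter_shifts i \<subseteq> Cpow q n s (inter_shifts i)"
      by (simp only: le_iff_inf)
    then have "inter_shifts i \<subseteq> {0}"
      by (rule Cpow_stable_subspace_trivial[OF subspace_inter_shifts inter_shifts_subset_C])
    with assms show False by contradiction
  qed
  ultimately show ?thesis by linarith
qed

lemma dim_inter_shifts:
  "Suc i < k \<Longrightarrow> fv.dim (inter_shifts i) = k - i \<and> fv.dim (inter_shifts (Suc i)) = k - Suc i"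
proof (induction i)
  case 0
  then show ?case using dim_C dim_C_Int_Cpow by simp
next
  case (Suc i)
  then have d: "fv.dim (inter_shifts i) = k - i" "fv.dim (inter_shifts (Suc i)) = k - Suc i"
    by simp_all
  have "2 * fv.dim (inter_shifts (Suc i))
      \<le> fv.dim (inter_shifts i) + fv.dim (inter_shifts (Suc (Suc i)))"
    using dim_Int_Cpow_convex[OF subspace_inter_shifts[of i], where t = s] by simp
  moreover have "fv.dim (inter_shifts (Suc i)) \<noteq> 0"
    using d(2) Suc.prems by simp
  then have "fv.dim (inter_shifts (Suc (Suc i))) < fv.dim (inter_shifts (Suc i))"
    by (intro dim_inter_shifts_Suc_less) simp
  ultimately have "fv.dim (inter_shifts (Suc (Suc i))) = k - Suc (Suc i)"
    using d Suc.prems by linarith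
  with d(2) show ?case by simp
qed

lemma exists_shift_generator: "\<exists>p. p \<noteq> 0 \<and> shifts q n s k p \<subseteq> C"
proof -
  have "fv.dim (inter_shifts (k - 1)) = 1"
  proof (cases "k = 1")
    case True
    then show ?thesis using dim_C by simp
  next
    case False
    then have "Suc (k - 2) < k" "Suc (k - 2) = k - 1" using k_pos by auto
    then show ?thesis using dim_inter_shifts[of "k - 2"] by simp
  qed
  then have "\<not> inter_shifts (k - 1) \<subseteq> {0}"
    using ffv.dim_eq_0[of "inter_shifts (k - 1)"] by simp
  then obtain g where g: "g \<in> inter_shifts (k - 1)" "g \<noteq> 0" by blast
  define p where "p = fpow q n (- s * int (k - 1)) g"
  have shift_p: "fpow q n (s * int j) p = fpow q n (- s * int (k - 1 - j)) g" if "j < k" for j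
    using that by (simp add: p_def fpow_fpow algebra_simps of_nat_diff)
  have "shifts q n s k p \<subseteq> C"
  proof
    fix f assume "f \<in> shifts q n s k p"
    then obtain j where "j < k" "f = fpow q n (s * int j) p" unfolding shifts_def by blast
    then show "f \<in> C" using inter_shifts_unshift_in_C[OF g(1), of "k - 1 - j"] shift_p by simp
  qed
  moreover have "p \<noteq> 0"
    using shift_p[of "k - 1"] g(2) k_pos by auto
  ultimately show ?thesis by blast
qed

lemma independent_shifts:
  assumes p: "p \<noteq> 0" and "shifts q n s m p \<subseteq> C"
  shows "fv.independent (shifts q n s m p) \<and> card (shifts q n s m p) = m"
  using assms(2)
proof (induction m)
  case 0
  then show ?case by (simp add: shifts_def fv.independent_empty)
next
  case (Suc m)
  let ?S = "shifts q n s m p" and ?v = "fpow q n (s * int m) p"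
  have insert: "shifts q n s (Suc m) p = insert ?v ?S"
    by (auto simp: shifts_def less_Suc_eq)
  have IH: "fv.independent ?S" "card ?S = m"
    using Suc insert by auto
  have new: "?v \<notin> fv.span ?S"
  proof
    assume "?v \<in> fv.span ?S"
    then have span_Suc: "shifts q n s (Suc m) p \<subseteq> fv.span ?S"
      using insert fv.span_superset by auto
    have "fpow q n s u \<in> shifts q n s (Suc m) p" if "u \<in> ?S" for u
    proof -
      obtain j where j: "j < m" "u = fpow q n (s * int j) p"
        using \<open>u \<in> ?S\<close> unfolding shifts_def by blast
      then have "fpow q n s u = fpow q n (s * int (Suc j)) p" by (simp add: fpow_fpow algebra_simps)
      then show ?thesis using j(1) unfolding shifts_def by (auto intro!: exI[of _ "Suc j"])
    qed
    then have "fpow q n s ` fv.span ?S \<subseteq> fv.span ?S"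
      unfolding fpow_span using span_Suc by (intro fv.span_minimal fv.subspace_span) auto
    moreover have "fv.span ?S \<subseteq> C"
      using Suc.prems insert by (intro fv.span_minimal subspace_C) auto
    ultimately have "fv.span ?S \<subseteq> {0}"
      by (intro invariant_subspace_trivial[OF fv.subspace_span _ _ coprime_s]) auto
    moreover have "p \<in> fv.span ?S" using span_Suc self_in_shifts by blast
    ultimately show False using p by blast
  qed
  then have "?v \<notin> ?S" using fv.span_base by blast
  with new IH show ?case by (simp add: insert fv.independent_insertI finite_shifts)
qed

lemma C_eq_span_shifts:
  obtains p where "p \<in> Lnq q n" and "C = fv.span (shifts q n s k p)"
proof -
  obtain p where p: "p \<noteq> 0" "shifts q n s k p \<subseteq> C"
    using exists_shift_generator by blast
  have "C \<subseteq> fv.span (shifts q n s k p)"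
    using ffv.card_eq_dim[OF p(2)] independent_shifts[OF p] dim_C finite_shifts by simp
  moreover have "fv.span (shifts q n s k p) \<subseteq> C"
    by (rule fv.span_minimal[OF p(2) subspace_C])
  moreover have "p \<in> Lnq q n"
    using p(2) self_in_shifts[OF k_pos] C_Lnq by blast
  ultimately show thesis using that by blast
qed

end

theorem lemma3p5:
  fixes q n k :: nat and s :: int and C :: "('a::{finite,field} \<Rightarrow> 'a) set"
  assumes "prime_power q" and "n \<ge> 1" and "card (UNIV :: 'a set) = q ^ n"
    and "gcd s (int n) = 1"
    and "C \<subseteq> Lnq q n" and "module.subspace fscale C"
    and "vector_space.dim fscale C = k" and "k > 1"
    and "vector_space.dim fscale (C \<inter> Cpow q n s C) = k - 1"
    and "C \<inter> U1 q n = {0}"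
  shows "\<exists>p \<in> Lnq q n.
           C = module.span fscale {fpow q n (s * int j) p | j. j < k} \<and>
           ((\<exists>f \<in> C. bij f) \<longrightarrow> bij p \<and> code_equiv q n C (Gks q n k s))"
proof -
  interpret shift_code q n "TYPE('a)" C s k
    using assms by unfold_locales simp_all
  obtain p where p: "p \<in> Lnq q n" "C = fv.span (shifts q n s k p)"
    by (rule C_eq_span_shifts)
  show ?thesis
  proof (rule bexI[OF conjI p(1)])
    show "C = fv.span {fpow q n (s * int j) p |j. j < k}"
      using p(2) by (simp only: shifts_def)
    show "(\<exists>f\<in>C. bij f) \<longrightarrow> bij p \<and> code_equiv q n C (Gks q n k s)"
    proof
      assume "\<exists>f\<in>C. bij f"
      then obtain f where "f \<in> fv.span (shifts q n s k p)" "bij f" using p(2) by blast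
      then have "inj p" by (blast intro: inj_of_inj_in_span_shifts bij_is_inj)
      then have "bij p" by (simp add: bij_def finite_UNIV_inj_surj)
      then show "bij p \<and> code_equiv q n C (Gks q n k s)"
        using code_equiv_Gks_if_span_shifts[OF C_Lnq p(2) p(1)] by simp
    qed
  qed
qed

end
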